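(* Let $\mathbf V$ be a monoid variety satisfying $xtx\approx xtx^2$. If $\mathbb M_\lambda(ata^+)\not\subseteq\mathbf V$, then $\mathbf V$ satisfies $xtx\approx x^2tx$.
   Context: Words are elements of the free monoid $\mathfrak A^*$ over a countably infinite alphabet. Let $\tau_1$ be the congruence on $\mathfrak A^*$ generated by $a=aa$ for all letters $a$. Define $\mathbf u\,\lambda\,\mathbf v$ iff $\mathbf u\,\tau_1\,\mathbf v$, $\mathbf u,\mathbf v$ have the same set of multiple (occurring at least twice) letters, and for each multiple letter its first two occurrences are adjacent in $\mathbf u$ iff they are adjacent in $\mathbf v$. For $\lambda$-classes, $\mathtt v\le\mathtt u$ iff $\mathtt u=\mathtt p\mathtt v\mathtt s$ in $\mathfrak A^*/\lambda$. For a set $\mathtt W$ of $\lambda$-classes, $M_\lambda(\mathtt W)$ is the Rees quotient of $\mathfrak A^*/\lambda$ by the ideal of classes not $\le$ any element of $\mathtt W$, and $\mathbb M_\lambda(\mathtt W)$ is the monoid variety it generates. Here $ata^+$ denotes the $\lambda$-class $\{ata^k:k\ge1\}$. *)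

theory Defs
  imports Main
begin

type_synonym word = "nat list"

inductive tau1 :: "word \<Rightarrow> word \<Rightarrow> bool" where
  tau1_refl: "tau1 u u"
| tau1_sym: "tau1 u v \<Longrightarrow> tau1 v u"
| tau1_trans: "tau1 u v \<Longrightarrow> tau1 v w \<Longrightarrow> tau1 u w"
| tau1_step: "tau1 (p @ [a] @ s) (p @ [a, a] @ s)"

definition multiple_letters :: "word \<Rightarrow> nat set" where
  "multiple_letters w = {x. 2 \<le> count_list w x}"

definition first_two_adjacent :: "word \<Rightarrow> nat \<Rightarrow> bool" where
  "first_two_adjacent w x \<longleftrightarrow> (\<exists>p s. w = p @ [x, x] @ s \<and> x \<notin> set p)"

definition lam :: "word \<Rightarrow> word \<Rightarrow> bool" where
  "lam u v \<longleftrightarrow> tau1 u v \<and> multiple_letters u = multiple_letters v \<and>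
     (\<forall>x \<in> multiple_letters u. first_two_adjacent u x \<longleftrightarrow> first_two_adjacent v x)"

definition lam_class :: "word \<Rightarrow> word set" where
  "lam_class w = {v. lam w v}"

definition lam_classes :: "word set set" where
  "lam_classes = range lam_class"

text \<open>v \<le> u iff u = p v s in the quotient monoid A*/lambda.\<close>
definition lam_le :: "word set \<Rightarrow> word set \<Rightarrow> bool" where
  "lam_le V U \<longleftrightarrow> (\<exists>p s u v. u \<in> U \<and> v \<in> V \<and> lam u (p @ v @ s))"

text \<open>The Rees quotient M_lambda(W): elements are None (the zero) or Some C for a
  lambda-class C below some element of W.\<close>
definition Mlam_carrier :: "word set set \<Rightarrow> word set option set" where
  "Mlam_carrier W = {None} \<union> {Some C | C. C \<in> lam_classes \<and> (\<exists>U \<in> W. lam_le C U)}"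

definition Mlam_mult :: "word set set \<Rightarrow> word set option \<Rightarrow> word set option \<Rightarrow> word set option" where
  "Mlam_mult W a b = (case (a, b) of
      (Some C, Some D) \<Rightarrow>
        (let w = (SOME u. u \<in> C) @ (SOME v. v \<in> D) in
           if (\<exists>U \<in> W. lam_le (lam_class w) U) then Some (lam_class w) else None)
    | _ \<Rightarrow> None)"

definition Mlam_one :: "word set option" where
  "Mlam_one = Some (lam_class [])"

definition Mlam_eval :: "word set set \<Rightarrow> (nat \<Rightarrow> word set option) \<Rightarrow> word \<Rightarrow> word set option" where
  "Mlam_eval W \<phi> w = foldr (\<lambda>x acc. Mlam_mult W (\<phi> x) acc) w Mlam_one"

definition Mlam_satisfies :: "word set set \<Rightarrow> word \<Rightarrow> word \<Rightarrow> bool" where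
  "Mlam_satisfies W u v \<longleftrightarrow>
     (\<forall>\<phi>. (\<forall>x. \<phi> x \<in> Mlam_carrier W) \<longrightarrow> Mlam_eval W \<phi> u = Mlam_eval W \<phi> v)"

text \<open>The lambda-class ata^+ = {a t a^k : k \<ge> 1}, with a = letter 0, t = letter 1.\<close>
definition ata_plus :: "word set" where
  "ata_plus = {[0, 1] @ replicate k 0 | k. 1 \<le> k}"

text \<open>Monoid varieties are represented by their equational theories, i.e. fully invariant
  congruences on the free monoid over the countably infinite alphabet.\<close>
definition subst_word :: "(nat \<Rightarrow> word) \<Rightarrow> word \<Rightarrow> word" where
  "subst_word \<sigma> w = concat (map \<sigma> w)"

definition fully_invariant_congruence :: "(word \<times> word) set \<Rightarrow> bool" where
  "fully_invariant_congruence E \<longleftrightarrow> equiv UNIV E \<and>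
     (\<forall>u v p s. (u, v) \<in> E \<longrightarrow> (p @ u @ s, p @ v @ s) \<in> E) \<and>
     (\<forall>\<sigma> u v. (u, v) \<in> E \<longrightarrow> (subst_word \<sigma> u, subst_word \<sigma> v) \<in> E)"

definition Mlam_in_variety :: "word set set \<Rightarrow> (word \<times> word) set \<Rightarrow> bool" where
  "Mlam_in_variety W E \<longleftrightarrow> (\<forall>(u, v) \<in> E. Mlam_satisfies W u v)"

end

theory Submission
  imports Defs
begin

text \<open>Let \<open>E\<close> be the equational theory of \<open>V\<close> and suppose \<open>xtx \<approx> x\<^sup>2tx\<close> is not in \<open>E\<close>.
  Then \<open>x \<approx> x\<^sup>k\<close> holds only for \<open>k = 1\<close> and \<open>1 \<approx> x\<^sup>k\<close> only for \<open>k = 0\<close>, since either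
  would yield \<open>xtx \<approx> x\<^sup>2tx\<close> with the help of \<open>x\<^sup>2 \<approx> x\<^sup>3\<close>. Hence the identities of \<open>E\<close>
  preserve the number of occurrences of each letter up to two or more, and the words
  \<open>E\<close>-equal to \<open>xtx\<close> are exactly those of \<open>ata\<^sup>+\<close>. Consequently an identity of \<open>E\<close>
  maps a factor of a word of \<open>ata\<^sup>+\<close> to a factor sitting in the same context, and two
  such factors with matching letter counts are \<open>\<lambda>\<close>-equivalent. Evaluating a word in
  \<open>M\<^sub>\<lambda>(ata\<^sup>+)\<close> amounts to substituting representatives of \<open>\<lambda>\<close>-classes and testing
  whether the result is such a factor, so \<open>M\<^sub>\<lambda>(ata\<^sup>+)\<close> satisfies \<open>E\<close>.\<close>

section \<open>The congruence \<open>\<lambda>\<close>\<close>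

lemma tau1_context: "tau1 u v \<Longrightarrow> tau1 (p @ u @ s) (p @ v @ s)"
proof (induction rule: tau1.induct)
  case (tau1_step q a r)
  have "tau1 ((p @ q) @ [a] @ (r @ s)) ((p @ q) @ [a, a] @ (r @ s))" by (rule tau1.tau1_step)
  then show ?case by simp
qed (auto intro: tau1.intros)

lemma tau1_append: "tau1 u v \<Longrightarrow> tau1 u' v' \<Longrightarrow> tau1 (u @ u') (v @ v')"
  using tau1_context[of u v "[]" u'] tau1_context[of u' v' v "[]"] by (auto intro: tau1_trans)

lemma tau1_imp_set_hd_last_eq:
  "tau1 u v \<Longrightarrow> set u = set v \<and> (u = [] \<longleftrightarrow> v = []) \<and> hd u = hd v \<and> last u = last v"
proof (induction rule: tau1.induct)
  case (tau1_step p a s)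
  then show ?case by (cases p; cases s rule: rev_cases) auto
qed auto

lemma first_two_adjacent_Nil [simp]: "\<not> first_two_adjacent [] x"
  unfolding first_two_adjacent_def by auto

lemma first_two_adjacent_Cons:
  "first_two_adjacent (y # w) x \<longleftrightarrow> (if y = x then w \<noteq> [] \<and> hd w = x else first_two_adjacent w x)"
proof
  assume "first_two_adjacent (y # w) x"
  then obtain p s where "y # w = p @ [x, x] @ s" "x \<notin> set p"
    unfolding first_two_adjacent_def by blast
  then show "if y = x then w \<noteq> [] \<and> hd w = x else first_two_adjacent w x"
    unfolding first_two_adjacent_def by (cases p) auto
next
  assume "if y = x then w \<noteq> [] \<and> hd w = x else first_two_adjacent w x"
  then show "first_two_adjacent (y # w) x"
    unfolding first_two_adjacent_def
    by (cases "y = x") (force simp: neq_Nil_conv, metis append_Cons set_ConsD)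
qed

lemma first_two_adjacent_append:
  "first_two_adjacent (a @ b) x \<longleftrightarrow>
     first_two_adjacent a x \<or>
     (a \<noteq> [] \<and> last a = x \<and> count_list a x = 1 \<and> b \<noteq> [] \<and> hd b = x) \<or>
     (x \<notin> set a \<and> first_two_adjacent b x)"
proof (induction a)
  case (Cons y a)
  then show ?case
    by (cases "y = x"; cases a) (auto simp: first_two_adjacent_Cons count_list_0_iff)
qed simp

lemma lam_iff:
  "lam u v \<longleftrightarrow> tau1 u v \<and> multiple_letters u = multiple_letters v \<and>
     (\<forall>x. first_two_adjacent u x \<longleftrightarrow> first_two_adjacent v x)"
proof -
  have "2 \<le> count_list w x" if "first_two_adjacent w x" for w x
    using that unfolding first_two_adjacent_def by auto
  then show ?thesis
    unfolding lam_def multiple_letters_def by blast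
qed

lemma lam_refl: "lam u u"
  unfolding lam_def by (simp add: tau1_refl)

lemma lam_sym: "lam u v \<Longrightarrow> lam v u"
  unfolding lam_iff by (metis tau1_sym)

lemma lam_trans: "lam u v \<Longrightarrow> lam v w \<Longrightarrow> lam u w"
  unfolding lam_iff by (metis tau1_trans)

lemma lam_class_eqI: "lam u v \<Longrightarrow> lam_class u = lam_class v"
  unfolding lam_class_def using lam_sym lam_trans by blast

lemma lam_min_count_eq:
  assumes "lam u v"
  shows "min (count_list u x) 2 = min (count_list v x) 2"
proof -
  have "set u = set v"
    using assms tau1_imp_set_hd_last_eq unfolding lam_def by blast
  then have "count_list u x = 0 \<longleftrightarrow> count_list v x = 0"
    by (simp add: count_list_0_iff)
  moreover have "2 \<le> count_list u x \<longleftrightarrow> 2 \<le> count_list v x"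
    using assms unfolding lam_def multiple_letters_def by blast
  ultimately show ?thesis by linarith
qed

lemma lam_append:
  assumes "lam u v" and "lam u' v'"
  shows "lam (u @ u') (v @ v')"
proof -
  have min_count: "min (count_list u x) 2 = min (count_list v x) 2"
    "min (count_list u' x) 2 = min (count_list v' x) 2" for x
    using assms by (simp_all add: lam_min_count_eq)
  have "2 \<le> count_list (u @ u') x \<longleftrightarrow> 2 \<le> count_list (v @ v') x" for x
    using min_count[of x] by simp arith
  then have "multiple_letters (u @ u') = multiple_letters (v @ v')"
    unfolding multiple_letters_def by blast
  moreover have "first_two_adjacent (u @ u') x \<longleftrightarrow> first_two_adjacent (v @ v') x" for x
  proof -
    have "count_list u x = 1 \<longleftrightarrow> count_list v x = 1"
      using min_count(1)[of x] by arith
    moreover have "set u = set v \<and> (u = [] \<longleftrightarrow> v = []) \<and> last u = last v"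
      "u' = [] \<longleftrightarrow> v' = []" "hd u' = hd v'"
      using assms tau1_imp_set_hd_last_eq unfolding lam_def by blast+
    moreover have "first_two_adjacent u x \<longleftrightarrow> first_two_adjacent v x"
      "first_two_adjacent u' x \<longleftrightarrow> first_two_adjacent v' x"
      using assms unfolding lam_iff by blast+
    ultimately show ?thesis
      unfolding first_two_adjacent_append by simp
  qed
  ultimately show ?thesis
    using assms tau1_append unfolding lam_iff by blast
qed

lemma lam_context: "lam u v \<Longrightarrow> lam (p @ u @ s) (p @ v @ s)"
  by (intro lam_append lam_refl)

lemma lam_repeat_last:
  assumes "c \<in> set w"
  shows "lam (w @ [c]) (w @ [c, c])"
proof -
  have "tau1 (w @ [c]) (w @ [c, c])"
    using tau1_step[of w c "[]"] by simp
  moreover have "count_list w c \<noteq> 0"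
    using assms by (simp add: count_list_0_iff)
  then have "multiple_letters (w @ [c]) = multiple_letters (w @ [c, c])"
    unfolding multiple_letters_def by auto
  moreover have "first_two_adjacent (w @ [c]) x \<longleftrightarrow> first_two_adjacent (w @ [c, c]) x" for x
    using assms unfolding first_two_adjacent_append by (auto simp: first_two_adjacent_Cons)
  ultimately show ?thesis
    unfolding lam_iff by blast
qed

lemma lam_snoc_replicate:
  assumes "c \<in> set w"
  shows "lam (w @ [c]) (w @ replicate (Suc k) c)"
proof (induction k)
  case (Suc k)
  have "lam ((w @ replicate k c) @ [c]) ((w @ replicate k c) @ [c, c])"
    using assms by (intro lam_repeat_last) simp
  moreover have "(w @ replicate k c) @ [c] = w @ replicate (Suc k) c"
    "(w @ replicate k c) @ [c, c] = w @ replicate (Suc (Suc k)) c"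
    by (induction k) auto
  ultimately have "lam (w @ replicate (Suc k) c) (w @ replicate (Suc (Suc k)) c)"
    by (simp only:)
  with Suc show ?case by (rule lam_trans)
qed (simp add: lam_refl)

lemma lam_append_replicate:
  assumes "count_list u c \<le> 1"
    and "min (count_list u c + m) 2 = min (count_list u c + n) 2"
  shows "lam (u @ replicate m c) (u @ replicate n c)"
proof (cases "m = n")
  case False
  obtain w i j where "c \<in> set w" "u @ replicate m c = w @ replicate (Suc i) c"
    "u @ replicate n c = w @ replicate (Suc j) c"
  proof (cases "c \<in> set u")
    case True
    with assms False have "0 < m" "0 < n"
      by (auto simp: min_def count_list_0_iff split: if_splits)
    with True show ?thesis
      by (intro that[of u "m - 1" "n - 1"]) auto
  next
    case False
    with assms \<open>m \<noteq> n\<close> have "2 \<le> m" "2 \<le> n"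
      by (auto simp: min_def count_list_0_iff split: if_splits)
    then show ?thesis
      by (intro that[of "u @ [c]" "m - 2" "n - 2"])
        (simp_all add: numeral_2_eq_2 Suc_diff_Suc flip: replicate_Suc)
  qed
  then show ?thesis
    using lam_snoc_replicate lam_sym lam_trans by metis
qed (simp add: lam_refl)

section \<open>The class \<open>ata\<^sup>+\<close> and its factors\<close>

lemma ata_plus_iff: "x \<in> ata_plus \<longleftrightarrow> (\<exists>k>0. x = 0 # 1 # replicate k 0)"
  unfolding ata_plus_def by auto

lemma single_one_decomp:
  assumes "set w \<subseteq> {0, 1}" and "count_list w 1 = 1"
  obtains i j where "w = replicate i 0 @ 1 # replicate j 0"
proof -
  obtain p s where ps: "w = p @ 1 # s" "1 \<notin> set p" "count_list s 1 = 0"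
    using count_list_Suc_split_first[of w 1 0] assms(2) by auto
  have "replicate (length p) 0 = p" "replicate (length s) 0 = s"
    using assms(1) ps by (auto intro!: replicate_length_same simp: count_list_0_iff)
  with ps(1) show ?thesis
    by (metis that)
qed

lemma count_list_replicate_same [simp]: "count_list (replicate n x) x = n"
  by (induction n) auto

lemma lam_xtx_imp_ata_plus:
  assumes "lam [0, 1, 0] y"
  shows "y \<in> ata_plus"
proof -
  have "tau1 y [0, 1, 0]"
    using assms tau1_sym unfolding lam_def by blast
  from tau1_imp_set_hd_last_eq[OF this]
  have set_y: "set y = {0, 1}" and hd_y: "hd y = 0" and last_y: "last y = 0"
    by auto
  have "count_list y 1 = 1"
    using lam_min_count_eq[OF assms, of 1] by simp
  moreover have "set y \<subseteq> {0, 1}"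
    using set_y by simp
  ultimately obtain i j where y: "y = replicate i 0 @ 1 # replicate j 0"
    using single_one_decomp by blast
  have "\<not> first_two_adjacent [0, 1, 0] 0"
    by (simp add: first_two_adjacent_Cons)
  with assms have "\<not> first_two_adjacent y 0"
    unfolding lam_iff by blast
  then have "\<not> 2 \<le> i"
    using y by (auto simp: first_two_adjacent_Cons numeral_2_eq_2 le_iff_add)
  moreover have "i \<noteq> 0"
    using hd_y y by (cases i) auto
  ultimately have "i = 1"
    by simp
  with y have "y = 0 # 1 # replicate j 0"
    by simp
  moreover have "j \<noteq> 0"
    using last_y y by (cases j) auto
  ultimately show ?thesis
    unfolding ata_plus_iff by blast
qed

lemma ata_plus_eq_lam_class: "ata_plus = lam_class [0, 1, 0]"
proof
  show "ata_plus \<subseteq> lam_class [0, 1, 0]"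
  proof
    fix x
    assume "x \<in> ata_plus"
    then obtain k where "0 < k" "x = [0, 1] @ replicate k 0"
      unfolding ata_plus_iff by auto
    moreover have "lam ([0, 1] @ replicate 1 0) ([0, 1] @ replicate k 0)"
      using \<open>0 < k\<close> by (intro lam_append_replicate) auto
    ultimately show "x \<in> lam_class [0, 1, 0]"
      unfolding lam_class_def by simp
  qed
  show "lam_class [0, 1, 0] \<subseteq> ata_plus"
    unfolding lam_class_def using lam_xtx_imp_ata_plus by blast
qed

lemma ata_plus_lam_closed: "x \<in> ata_plus \<Longrightarrow> lam x y \<Longrightarrow> y \<in> ata_plus"
  unfolding ata_plus_eq_lam_class lam_class_def using lam_trans by blast

lemma ata_plus_split_at_one:
  assumes "p @ 1 # w \<in> ata_plus"
  shows "p = [0] \<and> (\<forall>x \<in> set w. x = 0)"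
proof -
  obtain k where k: "p @ 1 # w = 0 # 1 # replicate k 0"
    using assms unfolding ata_plus_iff by blast
  show ?thesis
  proof (cases p)
    case Nil
    with k show ?thesis by simp
  next
    case (Cons q p')
    with k have p': "p' @ 1 # w = 1 # replicate k 0" by simp
    show ?thesis
    proof (cases p')
      case Nil
      with k Cons p' show ?thesis by simp
    next
      case (Cons r p'')
      with p' have "1 \<in> set (replicate k (0::nat))"
        by (metis append_Cons in_set_conv_decomp list.inject)
      then show ?thesis by simp
    qed
  qed
qed

lemma ata_plus_factor_without_one:
  assumes "p @ a @ s \<in> ata_plus" and "1 \<notin> set a"
  shows "a = replicate (length a) 0"
proof -
  obtain k where "p @ a @ s = 0 # 1 # replicate k 0"
    using assms(1) unfolding ata_plus_iff by blast
  then have "set a \<subseteq> set (0 # 1 # replicate k (0::nat))"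
    by (metis Un_iff set_append subsetI)
  with assms(2) have "\<forall>x \<in> set a. x = 0"
    by auto
  then show ?thesis
    by (simp add: replicate_length_same)
qed

lemma min_count_eq_imp_set_eq:
  assumes "\<And>c. min (count_list a c) 2 = min (count_list b c) 2"
  shows "set a = set b"
proof -
  have "count_list a c = 0 \<longleftrightarrow> count_list b c = 0" for c
    using assms[of c] by arith
  then show ?thesis
    by (metis count_list_0_iff set_eqI)
qed

lemma lam_of_factors_in_same_context:
  assumes a: "p @ a @ s \<in> ata_plus" and b: "p @ b @ s \<in> ata_plus"
    and count: "\<And>c. min (count_list a c) 2 = min (count_list b c) 2"
  shows "lam a b"
proof -
  from count have set_eq: "set a = set b"
    by (rule min_count_eq_imp_set_eq)
  show ?thesis
  proof (cases "1 \<in> set a")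
    case False
    then obtain m n where "a = replicate m 0" "b = replicate n 0"
      using ata_plus_factor_without_one a b set_eq by metis
    with count[of 0] show ?thesis
      using lam_append_replicate[of "[]" 0 m n] by simp
  next
    case True
    obtain a1 a2 where a_split: "a = a1 @ 1 # a2"
      using split_list[OF True] by blast
    obtain b1 b2 where b_split: "b = b1 @ 1 # b2"
      using split_list True set_eq by metis
    have "p @ a1 = [0]" and a2: "\<forall>x \<in> set a2. x = 0"
      using ata_plus_split_at_one[of "p @ a1" "a2 @ s"] a a_split by simp_all
    moreover have "p @ b1 = [0]" and b2: "\<forall>x \<in> set b2. x = 0"
      using ata_plus_split_at_one[of "p @ b1" "b2 @ s"] b b_split by simp_all
    ultimately have "b1 = a1"
      by (metis same_append_eq)
    have "length a1 \<le> 1"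
      using arg_cong[OF \<open>p @ a1 = [0]\<close>, of length] by simp
    with \<open>b1 = a1\<close> have "a = (a1 @ [1]) @ replicate (length a2) 0"
      and "b = (a1 @ [1]) @ replicate (length b2) 0" and "count_list (a1 @ [1]) 0 \<le> 1"
      using a_split b_split a2 b2 count_le_length[of a1 0] by (simp_all add: replicate_length_same)
    with count[of 0] show ?thesis
      using lam_append_replicate[of "a1 @ [1]" 0 "length a2" "length b2"] by simp
  qed
qed

definition ata_factor :: "word \<Rightarrow> bool" where
  "ata_factor z \<longleftrightarrow> (\<exists>p s. p @ z @ s \<in> ata_plus)"

lemma ata_factor_lam_closed: "ata_factor z \<Longrightarrow> lam z z' \<Longrightarrow> ata_factor z'"
  unfolding ata_factor_def using ata_plus_lam_closed lam_context by blast

lemma ata_factor_Nil: "ata_factor []"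
proof -
  have "[] @ [] @ [0, 1, 0] \<in> ata_plus"
    unfolding ata_plus_iff by (intro exI[of _ 1]) simp
  then show ?thesis
    unfolding ata_factor_def by blast
qed

lemma ata_factor_append_right: "ata_factor (a @ b) \<Longrightarrow> ata_factor b"
  unfolding ata_factor_def by (metis append.assoc)

lemma not_ata_factor_Cons_1_1: "\<not> ata_factor (1 # 1 # w)"
proof
  assume "ata_factor (1 # 1 # w)"
  then obtain p s where "p @ 1 # (1 # w @ s) \<in> ata_plus"
    unfolding ata_factor_def by auto
  from ata_plus_split_at_one[OF this] show False
    by simp
qed

lemma lam_le_ata_plus_iff: "lam_le (lam_class z) ata_plus \<longleftrightarrow> ata_factor z"
proof
  assume "lam_le (lam_class z) ata_plus"
  then obtain p s u v where "u \<in> ata_plus" "lam z v" "lam u (p @ v @ s)"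
    unfolding lam_le_def lam_class_def by blast
  then have "ata_factor v"
    unfolding ata_factor_def using ata_plus_lam_closed by blast
  with \<open>lam z v\<close> show "ata_factor z"
    using ata_factor_lam_closed lam_sym by blast
next
  assume "ata_factor z"
  then obtain p s where "p @ z @ s \<in> ata_plus"
    unfolding ata_factor_def by blast
  then show "lam_le (lam_class z) ata_plus"
    unfolding lam_le_def lam_class_def using lam_refl by blast
qed

section \<open>Evaluation in \<open>M\<^sub>\<lambda>(ata\<^sup>+)\<close>\<close>

lemma lam_some_lam_class: "lam u (SOME v. v \<in> lam_class u)"
proof -
  have "u \<in> lam_class u"
    unfolding lam_class_def by (simp add: lam_refl)
  then have "(SOME v. v \<in> lam_class u) \<in> lam_class u"
    by (rule someI)
  then show ?thesis
    unfolding lam_class_def by simp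
qed

lemma Mlam_mult_lam_class:
  "Mlam_mult W (Some (lam_class u)) (Some (lam_class v)) =
     (if \<exists>U \<in> W. lam_le (lam_class (u @ v)) U then Some (lam_class (u @ v)) else None)"
proof -
  have "lam (u @ v) ((SOME u'. u' \<in> lam_class u) @ (SOME v'. v' \<in> lam_class v))"
    by (intro lam_append lam_some_lam_class)
  then have "lam_class ((SOME u'. u' \<in> lam_class u) @ (SOME v'. v' \<in> lam_class v)) = lam_class (u @ v)"
    using lam_class_eqI lam_sym by metis
  then show ?thesis
    unfolding Mlam_mult_def by simp
qed

lemma Mlam_carrier_SomeD:
  assumes "Some C \<in> Mlam_carrier W"
  obtains u where "C = lam_class u"
  using assms unfolding Mlam_carrier_def lam_classes_def by auto

text \<open>\<open>[1, 1]\<close> is a factor of no word in \<open>ata\<^sup>+\<close>, so it represents the zero.\<close>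

definition rep_subst :: "(nat \<Rightarrow> word set option) \<Rightarrow> nat \<Rightarrow> word" where
  "rep_subst \<phi> x = (case \<phi> x of None \<Rightarrow> [1, 1] | Some C \<Rightarrow> (SOME u. u \<in> C))"

lemma Mlam_eval_ata_plus:
  assumes carrier: "\<And>x. \<phi> x \<in> Mlam_carrier {ata_plus}"
  shows "Mlam_eval {ata_plus} \<phi> w =
    (if ata_factor (subst_word (rep_subst \<phi>) w)
     then Some (lam_class (subst_word (rep_subst \<phi>) w)) else None)"
proof (induction w)
  case Nil
  show ?case
    using ata_factor_Nil unfolding Mlam_eval_def Mlam_one_def subst_word_def by simp
next
  case (Cons x w)
  let ?t = "subst_word (rep_subst \<phi>) w"
  have eval: "Mlam_eval {ata_plus} \<phi> (x # w) = Mlam_mult {ata_plus} (\<phi> x) (Mlam_eval {ata_plus} \<phi> w)"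
    unfolding Mlam_eval_def by simp
  have subst: "subst_word (rep_subst \<phi>) (x # w) = rep_subst \<phi> x @ ?t"
    unfolding subst_word_def by simp
  show ?case
  proof (cases "\<phi> x")
    case None
    then have "rep_subst \<phi> x = [1, 1]"
      unfolding rep_subst_def by simp
    with None show ?thesis
      using not_ata_factor_Cons_1_1 unfolding eval subst Mlam_mult_def by simp
  next
    case (Some C)
    then obtain u where "C = lam_class u"
      using carrier Mlam_carrier_SomeD by metis
    then have C: "C = lam_class (rep_subst \<phi> x)"
      using Some lam_some_lam_class lam_class_eqI unfolding rep_subst_def by simp
    show ?thesis
    proof (cases "ata_factor ?t")
      case False
      then show ?thesis
        using Cons.IH Some ata_factor_append_right unfolding eval subst Mlam_mult_def by auto
    next
      case True
      then show ?thesis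
        using Cons.IH Some C unfolding eval subst by (simp add: Mlam_mult_lam_class lam_le_ata_plus_iff)
    qed
  qed
qed

lemma Mlam_satisfies_ata_plusI:
  assumes "\<And>\<sigma>. ata_factor (subst_word \<sigma> u) \<longleftrightarrow> ata_factor (subst_word \<sigma> v)"
    and "\<And>\<sigma>. ata_factor (subst_word \<sigma> u) \<Longrightarrow> lam (subst_word \<sigma> u) (subst_word \<sigma> v)"
  shows "Mlam_satisfies {ata_plus} u v"
  unfolding Mlam_satisfies_def
proof (intro allI impI)
  fix \<phi> :: "nat \<Rightarrow> word set option"
  assume "\<forall>x. \<phi> x \<in> Mlam_carrier {ata_plus}"
  moreover have "lam_class (subst_word (rep_subst \<phi>) u) = lam_class (subst_word (rep_subst \<phi>) v)"
    if "ata_factor (subst_word (rep_subst \<phi>) u)"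
    using assms(2)[OF that] by (rule lam_class_eqI)
  ultimately show "Mlam_eval {ata_plus} \<phi> u = Mlam_eval {ata_plus} \<phi> v"
    using assms(1)[of "rep_subst \<phi>"] by (simp add: Mlam_eval_ata_plus)
qed

section \<open>Equational theories containing \<open>xtx \<approx> xtx\<^sup>2\<close> but not \<open>xtx \<approx> x\<^sup>2tx\<close>\<close>

lemma subst_word_keep_letter:
  "subst_word (\<lambda>x. if x = c then [0] else []) w = replicate (count_list w c) 0"
  unfolding subst_word_def by (induction w) auto

locale equational_theory =
  fixes E :: "(word \<times> word) set"
  assumes fully_invariant: "fully_invariant_congruence E"
begin

lemma E_refl: "(u, u) \<in> E"
  using fully_invariant unfolding fully_invariant_congruence_def equiv_def by (simp add: refl_on_def)

lemma E_sym: "(u, v) \<in> E \<Longrightarrow> (v, u) \<in> E"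
  using fully_invariant unfolding fully_invariant_congruence_def equiv_def by (meson symD)

lemma E_trans: "(u, v) \<in> E \<Longrightarrow> (v, w) \<in> E \<Longrightarrow> (u, w) \<in> E"
  using fully_invariant unfolding fully_invariant_congruence_def equiv_def by (meson transD)

lemma E_context: "(u, v) \<in> E \<Longrightarrow> (p @ u @ s, p @ v @ s) \<in> E"
  using fully_invariant unfolding fully_invariant_congruence_def by blast

lemma E_subst: "(u, v) \<in> E \<Longrightarrow> (subst_word \<sigma> u, subst_word \<sigma> v) \<in> E"
  using fully_invariant unfolding fully_invariant_congruence_def by blast

end

locale xtx_theory = equational_theory +
  assumes xtx_eq_xtxx: "([0, 1, 0], [0, 1, 0, 0]) \<in> E"
    and xtx_not_eq_xxtx: "([0, 1, 0], [0, 0, 1, 0]) \<notin> E"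
begin

lemma square_eq_cube: "([0, 0], [0, 0, 0]) \<in> E"
  using E_subst[OF xtx_eq_xtxx, of "\<lambda>x. if x = 0 then [0] else []"]
  unfolding subst_word_def by simp

lemma power_eq_power:
  assumes "2 \<le> m" and "2 \<le> n"
  shows "(replicate m 0, replicate n 0) \<in> E"
proof -
  have "(replicate 2 0, replicate (k + 2) 0) \<in> E" for k
  proof (induction k)
    case (Suc k)
    have "([] @ [0, 0] @ replicate k 0, [] @ [0, 0, 0] @ replicate k 0) \<in> E"
      using square_eq_cube by (rule E_context)
    then have "(replicate (k + 2) 0, replicate (Suc k + 2) 0) \<in> E"
      by (simp add: numeral_2_eq_2)
    with Suc show ?case
      by (rule E_trans)
  qed (simp add: E_refl numeral_2_eq_2)
  with assms show ?thesis
    using E_sym E_trans by (metis le_add_diff_inverse2)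
qed

lemma xtx_eq_ata_plus:
  assumes "x \<in> ata_plus"
  shows "([0, 1, 0], x) \<in> E"
proof -
  have "([0, 1, 0], [0, 1] @ replicate (Suc k) 0) \<in> E" for k
  proof (induction k)
    case (Suc k)
    have "([] @ [0, 1, 0] @ replicate k 0, [] @ [0, 1, 0, 0] @ replicate k 0) \<in> E"
      using xtx_eq_xtxx by (rule E_context)
    then have "([0, 1] @ replicate (Suc k) 0, [0, 1] @ replicate (Suc (Suc k)) 0) \<in> E"
      by simp
    with Suc show ?case
      by (rule E_trans)
  qed (simp add: E_refl)
  with assms show ?thesis
    unfolding ata_plus_iff by (metis Suc_pred append_Cons append_Nil)
qed

lemma not_power_eq_higher_power:
  assumes "(replicate m 0, replicate n 0) \<in> E" and "m < n" and "m < 2"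
  shows False
proof -
  \<comment> \<open>\<open>x\<^sup>m \<approx> x\<^sup>n \<approx> x\<^sup>n\<^sup>+\<^sup>1 \<approx> x\<^sup>m\<^sup>+\<^sup>1\<close>; multiplied into \<open>xtx\<close> this gives \<open>xtx \<approx> x\<^sup>2tx\<close>.\<close>
  have "(replicate m 0, replicate (Suc m) 0) \<in> E"
  proof (cases "n = Suc m")
    case False
    with assms(2) have "(replicate n 0, replicate (Suc n) 0) \<in> E"
      by (intro power_eq_power) auto
    with assms(1) have "(replicate m 0, [0] @ replicate n 0 @ []) \<in> E"
      by (simp add: E_trans)
    moreover have "([0] @ replicate n 0 @ [], [0] @ replicate m 0 @ []) \<in> E"
      using E_sym[OF assms(1)] by (rule E_context)
    ultimately show ?thesis
      by (simp add: E_trans)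
  qed (use assms(1) in simp)
  then have "(replicate (1 - m) 0 @ replicate m 0 @ [1, 0],
      replicate (1 - m) 0 @ replicate (Suc m) 0 @ [1, 0]) \<in> E"
    by (rule E_context)
  moreover have "m = 0 \<or> m = 1"
    using assms(3) by auto
  ultimately show False
    using xtx_not_eq_xxtx by (elim disjE) simp_all
qed

lemma power_eq_power_imp_min_eq:
  assumes "(replicate m 0, replicate n 0) \<in> E"
  shows "min m 2 = min n 2"
proof -
  have "min i 2 = min j 2" if "(replicate i 0, replicate j 0) \<in> E" "i < j" for i j
  proof (cases "i < 2")
    case True
    with that show ?thesis
      using not_power_eq_higher_power by blast
  qed (use that in simp)
  from this[of m n] this[of n m] show ?thesis
    using assms E_sym by (cases m n rule: linorder_cases) auto
qed

lemma min_count_eq: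
  assumes "(a, b) \<in> E"
  shows "min (count_list a c) 2 = min (count_list b c) 2"
  using E_subst[OF assms, of "\<lambda>x. if x = c then [0] else []"]
  unfolding subst_word_keep_letter by (rule power_eq_power_imp_min_eq)

lemma eq_xtx_decomp:
  assumes "([0, 1, 0], w) \<in> E"
  obtains i j where "w = replicate i 0 @ 1 # replicate j 0" and "2 \<le> i + j"
proof -
  have count: "min (count_list w c) 2 = min (count_list [0, 1, 0] c) 2" for c
    using min_count_eq[OF assms] by simp
  then have "set w = set [0, 1, 0]"
    by (rule min_count_eq_imp_set_eq)
  then have "set w \<subseteq> {0, 1}"
    by simp
  moreover have "count_list w 1 = 1"
    using count[of 1] by simp
  ultimately obtain i j where w: "w = replicate i 0 @ 1 # replicate j 0"
    using single_one_decomp by blast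
  moreover have "2 \<le> i + j"
    using count[of 0] w by simp
  ultimately show thesis
    by (rule that)
qed

lemma eq_xtx_imp_ata_plus:
  assumes xtx_w: "([0, 1, 0], w) \<in> E"
  shows "w \<in> ata_plus"
proof -
  obtain i j where w: "w = replicate i 0 @ 1 # replicate j 0" and "2 \<le> i + j"
    using eq_xtx_decomp[OF xtx_w] .
  show ?thesis
  proof (rule ccontr)
    \<comment> \<open>Otherwise \<open>x w \<approx> w\<close>, whence \<open>x\<^sup>2tx \<approx> x w \<approx> w \<approx> xtx\<close>.\<close>
    assume "w \<notin> ata_plus"
    have "i \<noteq> 1"
    proof
      assume "i = 1"
      with w \<open>2 \<le> i + j\<close> have "w = 0 # 1 # replicate j 0" and "0 < j"
        by simp_all
      with \<open>w \<notin> ata_plus\<close> show False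
        unfolding ata_plus_iff by blast
    qed
    have "(0 # w, w) \<in> E"
    proof (cases "i = 0")
      case True
      with w \<open>2 \<le> i + j\<close> have "0 # w \<in> ata_plus"
        unfolding ata_plus_iff by simp
      from E_sym[OF xtx_eq_ata_plus[OF this]] xtx_w show ?thesis
        by (rule E_trans)
    next
      case False
      with \<open>i \<noteq> 1\<close> have "(replicate (Suc i) 0, replicate i 0) \<in> E"
        by (intro power_eq_power) auto
      from E_context[OF this, of "[]" "1 # replicate j 0"] show ?thesis
        using w by simp
    qed
    moreover have "([0] @ [0, 1, 0] @ [], [0] @ w @ []) \<in> E"
      using xtx_w by (rule E_context)
    ultimately have "([0, 0, 1, 0], w) \<in> E"
      by (simp add: E_trans)
    with E_sym[OF xtx_w] have "([0, 0, 1, 0], [0, 1, 0]) \<in> E"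
      by (simp add: E_trans)
    with xtx_not_eq_xxtx show False
      using E_sym by blast
  qed
qed

lemma eq_ata_factor_imp_lam:
  assumes "(a, b) \<in> E" and "ata_factor a"
  shows "lam a b"
proof -
  obtain p s where a: "p @ a @ s \<in> ata_plus"
    using assms(2) unfolding ata_factor_def by blast
  have "([0, 1, 0], p @ b @ s) \<in> E"
    using xtx_eq_ata_plus[OF a] E_context[OF assms(1)] by (rule E_trans)
  then have "p @ b @ s \<in> ata_plus"
    by (rule eq_xtx_imp_ata_plus)
  with a show ?thesis
    using min_count_eq[OF assms(1)] by (rule lam_of_factors_in_same_context)
qed

lemma Mlam_ata_plus_in_variety: "Mlam_in_variety {ata_plus} E"
proof -
  have "Mlam_satisfies {ata_plus} u v" if "(u, v) \<in> E" for u v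
  proof (rule Mlam_satisfies_ata_plusI)
    fix \<sigma>
    have uv: "(subst_word \<sigma> u, subst_word \<sigma> v) \<in> E"
      using that by (rule E_subst)
    then show "ata_factor (subst_word \<sigma> u) \<Longrightarrow> lam (subst_word \<sigma> u) (subst_word \<sigma> v)"
      by (rule eq_ata_factor_imp_lam)
    show "ata_factor (subst_word \<sigma> u) \<longleftrightarrow> ata_factor (subst_word \<sigma> v)"
      using eq_ata_factor_imp_lam[OF uv] eq_ata_factor_imp_lam[OF E_sym[OF uv]]
        ata_factor_lam_closed by blast
  qed
  then show ?thesis
    unfolding Mlam_in_variety_def by blast
qed

end

theorem lemma4p4:
  fixes E :: "(nat list \<times> nat list) set"
  assumes "fully_invariant_congruence E"
    and "([0, 1, 0], [0, 1, 0, 0]) \<in> E"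
    and "\<not> Mlam_in_variety {ata_plus} E"
  shows "([0, 1, 0], [0, 0, 1, 0]) \<in> E"
proof (rule ccontr)
  assume "([0, 1, 0], [0, 0, 1, 0]) \<notin> E"
  with assms(1,2) interpret xtx_theory E
    by unfold_locales
  from assms(3) Mlam_ata_plus_in_variety show False
    by contradiction
qed

end
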